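(* Let $\sigma=(V,\mathrm{atime},\mathrm{pos})$ be an instance of $k$-MPMD on an $H$-metric space $(\chi,d_H)$ with parameter $\gamma$. For every $k$-element set $F=\{v_1,\ldots,v_k\}\subseteq V$, letting $v\in F$ be a request with $\mathrm{atime}(v)=\max_{u\in F}\mathrm{atime}(u)$, $$\frac{1}{\gamma k^2}\sum_{i=1}^{k-1}\sum_{j=i+1}^{k}\mathrm{opt\text{-}cost}(v_i,v_j)\;\le\;\mathrm{opt\text{-}cost}(F)\;\le\;\sum_{i=1}^{k}\mathrm{opt\text{-}cost}(v,v_i),$$ where $\mathrm{opt\text{-}cost}(v,v):=0$.
   Context: $k\ge2$. An $H$-metric with parameter $\gamma$ (integer, $1\le\gamma\le k-1$) is a map $d_H:\chi^k\to[0,\infty)$ that is invariant under permutation of its arguments, is zero iff all arguments are equal, satisfies $d_H(p_1,\ldots,p_k)\le d_H(p_1,\ldots,p_i,a,\ldots,a)+d_H(a,\ldots,a,p_{i+1},\ldots,p_k)$ for all $p_j,a\in\chi$ and $i\in\{1,\dots,k\}$ (with $k-i$, resp. $i$, copies of $a$), and satisfies: $d_H(p)\le d_H(p')$ whenever the set of distinct entries of $p$ is a proper subset of that of $p'$, and $d_H(p)\le\gamma d_H(p')$ whenever these sets are equal. An instance of $k$-MPMD is $\sigma=(V,\mathrm{atime},\mathrm{pos})$ with $V=\{u_1,\ldots,u_m\}$ a set of requests ($m$ a multiple of $k$), arrival times $\mathrm{atime}:V\to\mathbb R_{\ge0}$ with $\mathrm{atime}(u_1)\le\cdots\le\mathrm{atime}(u_m)$,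 and positions $\mathrm{pos}:V\to\chi$. For a $k$-element $F=\{v_1,\ldots,v_k\}\subseteq V$, $\mathrm{opt\text{-}cost}(F):=d_H(\mathrm{pos}(v_1),\ldots,\mathrm{pos}(v_k))+\sum_{i=1}^k\big(\max_j\mathrm{atime}(v_j)-\mathrm{atime}(v_i)\big)$. The metric $d$ on $\chi$ is $d(p,q):=d_H(p,q,\ldots,q)+d_H(q,p,\ldots,p)$ (first argument once, second $k-1$ times). For distinct requests $u,w$, $\mathrm{opt\text{-}cost}(u,w):=d(\mathrm{pos}(u),\mathrm{pos}(w))+|\mathrm{atime}(u)-\mathrm{atime}(w)|$. *)

theory Defs
  imports Complex_Main "HOL-Library.Multiset"
begin

definition H_metric :: "nat \<Rightarrow> nat \<Rightarrow> ('p list \<Rightarrow> real) \<Rightarrow> bool" where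
  "H_metric k \<gamma> dH \<longleftrightarrow>
     1 \<le> \<gamma> \<and> \<gamma> \<le> k - 1 \<and>
     (\<forall>ps. length ps = k \<longrightarrow> 0 \<le> dH ps) \<and>
     (\<forall>ps qs. length ps = k \<longrightarrow> mset qs = mset ps \<longrightarrow> dH qs = dH ps) \<and>
     (\<forall>ps. length ps = k \<longrightarrow> (dH ps = 0 \<longleftrightarrow> (\<forall>x\<in>set ps. \<forall>y\<in>set ps. x = y))) \<and>
     (\<forall>ps a i. length ps = k \<longrightarrow> 1 \<le> i \<longrightarrow> i \<le> k \<longrightarrow>
        dH ps \<le> dH (take i ps @ replicate (k - i) a) + dH (replicate i a @ drop i ps)) \<and>
     (\<forall>ps qs. length ps = k \<longrightarrow> length qs = k \<longrightarrow> set ps \<subset> set qs \<longrightarrow> dH ps \<le> dH qs) \<and>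
     (\<forall>ps qs. length ps = k \<longrightarrow> length qs = k \<longrightarrow> set ps = set qs \<longrightarrow> dH ps \<le> real \<gamma> * dH qs)"

definition induced_metric :: "nat \<Rightarrow> ('p list \<Rightarrow> real) \<Rightarrow> 'p \<Rightarrow> 'p \<Rightarrow> real" where
  "induced_metric k dH p q = dH (p # replicate (k - 1) q) + dH (q # replicate (k - 1) p)"

definition MPMD_instance :: "nat \<Rightarrow> 'v set \<Rightarrow> ('v \<Rightarrow> real) \<Rightarrow> ('v \<Rightarrow> 'p) \<Rightarrow> bool" where
  "MPMD_instance k V atime pos \<longleftrightarrow> finite V \<and> k dvd card V \<and> (\<forall>u\<in>V. 0 \<le> atime u)"

definition opt_cost_set :: "('p list \<Rightarrow> real) \<Rightarrow> ('v \<Rightarrow> real) \<Rightarrow> ('v \<Rightarrow> 'p) \<Rightarrow> 'v list \<Rightarrow> real" where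
  "opt_cost_set dH atime pos vs =
     dH (map pos vs) + (\<Sum>i<length vs. Max (atime ` set vs) - atime (vs ! i))"

definition opt_cost_pair :: "nat \<Rightarrow> ('p list \<Rightarrow> real) \<Rightarrow> ('v \<Rightarrow> real) \<Rightarrow> ('v \<Rightarrow> 'p) \<Rightarrow> 'v \<Rightarrow> 'v \<Rightarrow> real" where
  "opt_cost_pair k dH atime pos u w =
     (if u = w then 0 else induced_metric k dH (pos u) (pos w) + \<bar>atime u - atime w\<bar>)"

end

theory Submission
  imports Defs
begin

text \<open>
  Upper bound: replacing the points of the tuple one at a time by the position of the latest
  request v, the triangle inequality of the H-metric bounds dH(F) by the sum of
  dH(p_i, p_v, ..., p_v), each of which is a summand of d(p_v, p_i); the waiting time of v_i is
  exactly |atime v - atime v_i|.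
  Lower bound: both tuples in d(p_i, p_j) use only points of F, so monotonicity of the H-metric
  bounds d(p_i, p_j) by 2 gamma dH(F), and every arrival-time difference is at most the total
  waiting time. Summing over the k(k-1)/2 pairs gives at most gamma k(k-1) opt-cost(F).
\<close>

lemma H_metric_gamma_ge_1: "H_metric k \<gamma> dH \<Longrightarrow> 1 \<le> \<gamma>"
  unfolding H_metric_def by blast

lemma H_metric_arity_ge_2: "H_metric k \<gamma> dH \<Longrightarrow> 2 \<le> k"
  unfolding H_metric_def by linarith

lemma H_metric_nonneg: "H_metric k \<gamma> dH \<Longrightarrow> length ps = k \<Longrightarrow> 0 \<le> dH ps"
  unfolding H_metric_def by blast

lemma H_metric_perm:
  "H_metric k \<gamma> dH \<Longrightarrow> length ps = k \<Longrightarrow> mset qs = mset ps \<Longrightarrow> dH qs = dH ps"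
  unfolding H_metric_def by blast

lemma H_metric_eq_0_iff:
  "H_metric k \<gamma> dH \<Longrightarrow> length ps = k \<Longrightarrow> dH ps = 0 \<longleftrightarrow> (\<forall>x\<in>set ps. \<forall>y\<in>set ps. x = y)"
  unfolding H_metric_def by blast

lemma H_metric_triangle:
  "H_metric k \<gamma> dH \<Longrightarrow> length ps = k \<Longrightarrow> 1 \<le> i \<Longrightarrow> i \<le> k \<Longrightarrow>
    dH ps \<le> dH (take i ps @ replicate (k - i) a) + dH (replicate i a @ drop i ps)"
  unfolding H_metric_def by blast

lemma H_metric_mono_psubset:
  "H_metric k \<gamma> dH \<Longrightarrow> length ps = k \<Longrightarrow> length qs = k \<Longrightarrow> set ps \<subset> set qs \<Longrightarrow>
    dH ps \<le> dH qs"
  unfolding H_metric_def by blast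

lemma H_metric_le_gamma_same_set:
  "H_metric k \<gamma> dH \<Longrightarrow> length ps = k \<Longrightarrow> length qs = k \<Longrightarrow> set ps = set qs \<Longrightarrow>
    dH ps \<le> real \<gamma> * dH qs"
  unfolding H_metric_def by blast

lemma H_metric_le_sum_against_point:
  assumes H: "H_metric k \<gamma> dH" and len: "length ps = k"
  shows "dH ps \<le> (\<Sum>l<k. dH (ps ! l # replicate (k - 1) a))"
proof -
  define f where "f j = dH (replicate j a @ drop j ps)" for j
  define g where "g l = dH (ps ! l # replicate (k - 1) a)" for l
  have replace_one: "f j \<le> g j + f (Suc j)" if "j < k" for j
  proof -
    define qs where "qs = ps ! j # replicate j a @ drop (Suc j) ps"
    have "drop j ps = ps ! j # drop (Suc j) ps"
      using that len by (simp add: Cons_nth_drop_Suc)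
    then have "mset qs = mset (replicate j a @ drop j ps)"
      by (simp add: qs_def)
    then have "f j = dH qs"
      unfolding f_def
      using H_metric_perm[OF H, where ps = "replicate j a @ drop j ps" and qs = qs] that len
      by simp
    also have "\<dots> \<le> dH (take 1 qs @ replicate (k - 1) a) + dH (replicate 1 a @ drop 1 qs)"
      using H_metric_triangle[OF H, where ps = qs and i = 1] H_metric_arity_ge_2[OF H] that len
      by (simp add: qs_def)
    also have "\<dots> = g j + f (Suc j)"
      by (simp add: qs_def f_def g_def)
    finally show ?thesis .
  qed
  have "f j \<le> (\<Sum>l\<in>{j..<k}. g l)" if "j \<le> k" for j
    using that
  proof (induction j rule: inc_induct)
    case base
    have "f k = 0"
      unfolding f_def using H_metric_eq_0_iff[OF H, where ps = "replicate k a"] len by simp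
    then show ?case by simp
  next
    case (step j)
    then show ?case
      using replace_one[of j] by (simp add: sum.atLeast_Suc_lessThan)
  qed
  from this[of 0] show ?thesis
    by (simp add: f_def g_def atLeast0LessThan)
qed

lemma H_metric_le_gamma_subset:
  assumes H: "H_metric k \<gamma> dH" and "length ps = k" "length qs = k" "set ps \<subseteq> set qs"
  shows "dH ps \<le> real \<gamma> * dH qs"
proof (cases "set ps = set qs")
  case True
  then show ?thesis using H_metric_le_gamma_same_set[OF H] assms by blast
next
  case False
  then have "dH ps \<le> dH qs"
    using H_metric_mono_psubset[OF H] assms by blast
  moreover have "dH qs \<le> real \<gamma> * dH qs"
    using H_metric_gamma_ge_1[OF H] H_metric_nonneg[OF H \<open>length qs = k\<close>]
    by (simp add: mult_le_cancel_right1)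
  ultimately show ?thesis by linarith
qed

lemma induced_metric_le_H_metric:
  assumes H: "H_metric k \<gamma> dH" and len: "length ps = k"
    and "x \<in> set ps" "y \<in> set ps"
  shows "induced_metric k dH x y \<le> 2 * real \<gamma> * dH ps"
proof -
  have len_xy: "length (x # replicate (k - 1) y) = k" "length (y # replicate (k - 1) x) = k"
    using H_metric_arity_ge_2[OF H] by simp_all
  have "dH (x # replicate (k - 1) y) \<le> real \<gamma> * dH ps"
    by (rule H_metric_le_gamma_subset[OF H len_xy(1) len]) (use assms in auto)
  moreover have "dH (y # replicate (k - 1) x) \<le> real \<gamma> * dH ps"
    by (rule H_metric_le_gamma_subset[OF H len_xy(2) len]) (use assms in auto)
  ultimately show ?thesis
    by (simp add: induced_metric_def)
qed

definition waiting_cost :: "('v \<Rightarrow> real) \<Rightarrow> 'v list \<Rightarrow> real" where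
  "waiting_cost atime vs = (\<Sum>i<length vs. Max (atime ` set vs) - atime (vs ! i))"

lemma opt_cost_set_eq: "opt_cost_set dH atime pos vs = dH (map pos vs) + waiting_cost atime vs"
  by (simp add: opt_cost_set_def waiting_cost_def)

lemma atime_le_Max: "i < length vs \<Longrightarrow> atime (vs ! i) \<le> Max (atime ` set vs)"
  by (intro Max_ge) auto

lemma waiting_time_le_waiting_cost:
  "i < length vs \<Longrightarrow> Max (atime ` set vs) - atime (vs ! i) \<le> waiting_cost atime vs"
  unfolding waiting_cost_def
  by (intro member_le_sum[where f = "\<lambda>i. Max (atime ` set vs) - atime (vs ! i)"])
     (auto simp: atime_le_Max)

lemma waiting_cost_nonneg: "0 \<le> waiting_cost atime vs"
  unfolding waiting_cost_def by (intro sum_nonneg) (simp add: atime_le_Max)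

lemma atime_diff_le_waiting_cost:
  assumes "i < length vs" "j < length vs"
  shows "\<bar>atime (vs ! i) - atime (vs ! j)\<bar> \<le> waiting_cost atime vs"
  using atime_le_Max[OF assms(1), of atime] atime_le_Max[OF assms(2), of atime]
    waiting_time_le_waiting_cost[OF assms(1), of atime]
    waiting_time_le_waiting_cost[OF assms(2), of atime]
  by linarith

lemma opt_cost_set_nonneg:
  "H_metric (length vs) \<gamma> dH \<Longrightarrow> 0 \<le> opt_cost_set dH atime pos vs"
  using H_metric_nonneg[of "length vs" \<gamma> dH "map pos vs"] waiting_cost_nonneg[of atime vs]
  by (simp add: opt_cost_set_eq)

lemma opt_cost_pair_le_opt_cost_set:
  assumes H: "H_metric k \<gamma> dH" and len: "length vs = k" and "i < k" "j < k"
  shows "opt_cost_pair k dH atime pos (vs ! i) (vs ! j)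
    \<le> 2 * real \<gamma> * opt_cost_set dH atime pos vs"
proof (cases "vs ! i = vs ! j")
  case True
  have "0 \<le> opt_cost_set dH atime pos vs"
    using opt_cost_set_nonneg H len by blast
  then show ?thesis
    using True H_metric_gamma_ge_1[OF H] by (simp add: opt_cost_pair_def)
next
  case False
  let ?W = "waiting_cost atime vs"
  have "induced_metric k dH (pos (vs ! i)) (pos (vs ! j)) \<le> 2 * real \<gamma> * dH (map pos vs)"
    using induced_metric_le_H_metric[OF H] assms by simp
  moreover have "\<bar>atime (vs ! i) - atime (vs ! j)\<bar> \<le> 2 * real \<gamma> * ?W"
  proof -
    have "?W \<le> 2 * real \<gamma> * ?W"
      using waiting_cost_nonneg[of atime vs] H_metric_gamma_ge_1[OF H]
      by (simp add: mult_le_cancel_right1)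
    then show ?thesis
      using atime_diff_le_waiting_cost[of i vs j atime] assms by linarith
  qed
  ultimately show ?thesis
    using False by (simp add: opt_cost_pair_def opt_cost_set_eq algebra_simps)
qed

lemma double_sum_upper_triangle_const:
  "2 * (\<Sum>i<n - 1. \<Sum>j\<in>{i+1..<n}. (c::real)) = real n * (real n - 1) * c"
proof (cases n)
  case (Suc m)
  have "2 * (\<Sum>i<m. \<Sum>j\<in>{i+1..<Suc m}. c) = real (Suc m) * real m * c"
  proof (induction m)
    case (Suc m)
    have "(\<Sum>i<Suc m. \<Sum>j\<in>{i+1..<Suc (Suc m)}. c)
        = (\<Sum>i<Suc m. (\<Sum>j\<in>{i+1..<Suc m}. c) + c)"
      by (intro sum.cong) (auto simp: algebra_simps)
    also have "\<dots> = (\<Sum>i<m. \<Sum>j\<in>{i+1..<Suc m}. c) + real (Suc m) * c"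
      by (simp only: sum.distrib sum.lessThan_Suc) (simp add: algebra_simps)
    finally show ?case using Suc.IH by (simp add: algebra_simps)
  qed simp
  then show ?thesis using Suc by simp
qed simp

lemma sum_opt_cost_pair_le_opt_cost_set:
  assumes H: "H_metric k \<gamma> dH" and len: "length vs = k"
  shows "(\<Sum>i<k - 1. \<Sum>j\<in>{i+1..<k}. opt_cost_pair k dH atime pos (vs ! i) (vs ! j))
    \<le> real \<gamma> * real k ^ 2 * opt_cost_set dH atime pos vs"
proof -
  let ?C = "opt_cost_set dH atime pos vs"
  have "(\<Sum>i<k - 1. \<Sum>j\<in>{i+1..<k}. opt_cost_pair k dH atime pos (vs ! i) (vs ! j))
      \<le> (\<Sum>i<k - 1. \<Sum>j\<in>{i+1..<k}. 2 * real \<gamma> * ?C)"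
    by (intro sum_mono opt_cost_pair_le_opt_cost_set[OF H len]) auto
  also have "\<dots> = real \<gamma> * (real k * (real k - 1)) * ?C"
    using double_sum_upper_triangle_const[where n = k and c = "2 * real \<gamma> * ?C"] by simp
  also have "\<dots> \<le> real \<gamma> * real k ^ 2 * ?C"
    using opt_cost_set_nonneg[of vs \<gamma> dH atime pos] H len
    by (intro mult_right_mono mult_left_mono) (auto simp: power2_eq_square algebra_simps)
  finally show ?thesis .
qed

lemma opt_cost_set_le_sum_opt_cost_pair_latest:
  assumes H: "H_metric k \<gamma> dH" and len: "length vs = k"
    and latest: "atime v = Max (atime ` set vs)"
  shows "opt_cost_set dH atime pos vs \<le> (\<Sum>i<k. opt_cost_pair k dH atime pos v (vs ! i))"
proof -
  have pair: "dH (pos (vs ! i) # replicate (k - 1) (pos v)) + (atime v - atime (vs ! i))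
      \<le> opt_cost_pair k dH atime pos v (vs ! i)" if "i < k" for i
  proof (cases "vs ! i = v")
    case True
    have "pos (vs ! i) # replicate (k - 1) (pos v) = replicate k (pos v)"
      using True H_metric_arity_ge_2[OF H] by (simp add: replicate_Suc[symmetric])
    then show ?thesis
      using True H_metric_eq_0_iff[OF H, where ps = "replicate k (pos v)"]
      by (simp add: opt_cost_pair_def)
  next
    case False
    have "0 \<le> dH (pos v # replicate (k - 1) (pos (vs ! i)))"
      using H_metric_nonneg[OF H] H_metric_arity_ge_2[OF H] by simp
    moreover have "atime (vs ! i) \<le> atime v"
      using atime_le_Max[of i vs atime] that len latest by simp
    ultimately show ?thesis
      using False by (simp add: opt_cost_pair_def induced_metric_def eq_commute[of v])
  qed
  have "opt_cost_set dH atime pos vs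
      \<le> (\<Sum>i<k. dH (pos (vs ! i) # replicate (k - 1) (pos v))) + waiting_cost atime vs"
    using H_metric_le_sum_against_point[OF H, where ps = "map pos vs" and a = "pos v"] len
    by (simp add: opt_cost_set_eq)
  also have "\<dots> = (\<Sum>i<k. dH (pos (vs ! i) # replicate (k - 1) (pos v))
      + (atime v - atime (vs ! i)))"
    using len latest by (simp add: waiting_cost_def sum.distrib)
  also have "\<dots> \<le> (\<Sum>i<k. opt_cost_pair k dH atime pos v (vs ! i))"
    by (intro sum_mono pair) simp
  finally show ?thesis .
qed

theorem lemma1:
  fixes k \<gamma> :: nat and dH :: "'p list \<Rightarrow> real"
    and V :: "'v set" and atime :: "'v \<Rightarrow> real" and pos :: "'v \<Rightarrow> 'p"
    and vs :: "'v list" and v :: 'v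
  assumes "2 \<le> k"
    and "H_metric k \<gamma> dH"
    and "MPMD_instance k V atime pos"
    and "distinct vs" and "length vs = k" and "set vs \<subseteq> V"
    and "v \<in> set vs" and "atime v = Max (atime ` set vs)"
  shows "(1 / (real \<gamma> * real k ^ 2)) *
           (\<Sum>i<k - 1. \<Sum>j\<in>{i+1..<k}. opt_cost_pair k dH atime pos (vs ! i) (vs ! j))
         \<le> opt_cost_set dH atime pos vs
       \<and> opt_cost_set dH atime pos vs
         \<le> (\<Sum>i<k. opt_cost_pair k dH atime pos v (vs ! i))"
proof
  have "0 < real \<gamma> * real k ^ 2"
    using H_metric_gamma_ge_1[OF assms(2)] assms(1) by simp
  then show "(1 / (real \<gamma> * real k ^ 2)) *
      (\<Sum>i<k - 1. \<Sum>j\<in>{i+1..<k}. opt_cost_pair k dH atime pos (vs ! i) (vs ! j))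
    \<le> opt_cost_set dH atime pos vs"
    using sum_opt_cost_pair_le_opt_cost_set[OF assms(2,5), of atime pos]
    by (simp add: field_simps)
  show "opt_cost_set dH atime pos vs \<le> (\<Sum>i<k. opt_cost_pair k dH atime pos v (vs ! i))"
    using opt_cost_set_le_sum_opt_cost_pair_latest[OF assms(2,5,8)] .
qed

end
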